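(* Let $m\ge 2$, let $B$ be a blocker in $CK(2m)$, and let $e=[i,j]\in B$ with $0\le i<j\le 2m-1$, so that $j-i-1=2k$ and $2m-(j-i)-1=2l$ with $k,l\ge 0$, $k+l=m-1$. Let $G_1^+$ be the complete convex geometric graph on the vertices $i,i+1,\dots,j$ and $G_2^+$ the one on the vertices $j,j+1,\dots,2m-1,0,1,\dots,i$. Then $B\cap E(G_1^+)$ is a blocker in $G_1^+$ (a blocking set with exactly $k+1$ edges), $B\cap E(G_2^+)$ is a blocker in $G_2^+$ (a blocking set with exactly $l+1$ edges), and no edge of $B$ crosses $e$ in an interior point. Consequently $B$ is crossing-free.
   Context: $CK(2m)$ denotes the complete convex geometric graph whose vertices are the $2m$ vertices of a convex polygon, labelled cyclically $0,1,\dots,2m-1$, and whose edges are all straight segments between pairs of vertices. Two edges with four distinct endpoints cross iff their endpoints alternate in the cyclic order. For a set of $2n$ points in convex position, consider the complete convex geometric graph on them; an SPM is a set of $n$ pairwise disjoint edges (no common endpoint and no crossing), a blocking set is a set of edges containing at least one edge of every SPM, and a blocker is a blocking set of exactly $n$ edges. $E(H)$ denotes the edge set of $H$. *)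

theory Defs
  imports Main
begin

text \<open>Vertices of CK(2m) are the labels 0..2m-1 (natural numbers); a geometric
graph on a subset V of these labels inherits the cyclic (convex) order.
Edges are 2-element sets of vertices.\<close>

definition cgg_edges :: "nat set \<Rightarrow> nat set set" where
  "cgg_edges V = {{a, b} | a b. a \<in> V \<and> b \<in> V \<and> a \<noteq> b}"

text \<open>Two edges cross iff they have four distinct endpoints alternating in
the cyclic order; for labels this is the linear interleaving a < c < b < d.\<close>

definition crosses :: "nat set \<Rightarrow> nat set \<Rightarrow> bool" where
  "crosses e f \<longleftrightarrow> (\<exists>a b c d. e = {a, b} \<and> f = {c, d} \<and>
      ((a < c \<and> c < b \<and> b < d) \<or> (c < a \<and> a < d \<and> d < b)))"

definition SPM :: "nat set \<Rightarrow> nat set set \<Rightarrow> bool" where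
  "SPM V M \<longleftrightarrow> M \<subseteq> cgg_edges V \<and> card M = card V div 2 \<and>
     (\<forall>e\<in>M. \<forall>f\<in>M. e \<noteq> f \<longrightarrow> e \<inter> f = {} \<and> \<not> crosses e f)"

definition blocking_set :: "nat set \<Rightarrow> nat set set \<Rightarrow> bool" where
  "blocking_set V S \<longleftrightarrow> S \<subseteq> cgg_edges V \<and> (\<forall>M. SPM V M \<longrightarrow> S \<inter> M \<noteq> {})"

definition blocker :: "nat set \<Rightarrow> nat set set \<Rightarrow> bool" where
  "blocker V S \<longleftrightarrow> blocking_set V S \<and> card S = card V div 2"

end

theory Submission
  imports Defs
begin

(* Write V for a finite convex vertex set with
   |V| = 2n.  Rotating the "parallel class" of the chord {t, t+1} gives n pairwise
   edge-disjoint SPMs of V; hence every blocking set has at least n edges, and in a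
   blocker B each edge g is the only edge of B in some SPM Q ("private SPM" of g).
   Let e = {i,j} be an edge of B and Q its private SPM.  The other edges of Q lie
   either strictly inside (i,j) or entirely outside [i,j]; counting shows that both
   sides of e contain an even number of vertices and are matched perfectly by Q.
   Gluing any SPM of one side of e with the edges of Q on the other side yields an
   SPM of V, which must meet B outside Q; so B restricted to either side blocks it.
   The lower bound on blocking sets of the two sides, together with |B| = n, forces
   both restrictions to be blockers and to exhaust B, so no edge of B crosses e. *)

section \<open>Crossings\<close>

lemma crosses_sym: "crosses e f \<longleftrightarrow> crosses f e"
  unfolding crosses_def by blast

lemma crosses_intro: "a < c \<Longrightarrow> c < b \<Longrightarrow> b < (d::nat) \<Longrightarrow> crosses {a, b} {c, d}"
  unfolding crosses_def by blast

lemma crosses_iff: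
  "crosses {x, y} {u, v} \<longleftrightarrow>
    (x<u \<and> u<y \<and> y<v) \<or> (x<v \<and> v<y \<and> y<u) \<or> (y<u \<and> u<x \<and> x<v) \<or> (y<v \<and> v<x \<and> x<u) \<or>
    (u<x \<and> x<v \<and> v<y) \<or> (u<y \<and> y<v \<and> v<x) \<or> (v<x \<and> x<u \<and> u<y) \<or> (v<y \<and> y<u \<and> u<x)"
  (is "?L \<longleftrightarrow> ?R")
proof
  assume ?L
  then obtain a b c d where "{x, y} = {a, b}" "{u, v} = {c, d}"
    "(a < c \<and> c < b \<and> b < d) \<or> (c < a \<and> a < d \<and> d < b)"
    unfolding crosses_def by blast
  then show ?R by (auto simp: doubleton_eq_iff)
next
  have swap: "crosses {a, b} f \<longleftrightarrow> crosses {b, a} f" "crosses f {a, b} \<longleftrightarrow> crosses f {b, a}"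
    for a b :: nat and f by (simp_all add: insert_commute)
  assume ?R then show ?L
    using crosses_intro[of x u y v] crosses_intro[of x v y u] crosses_intro[of y u x v]
      crosses_intro[of y v x u] crosses_intro[of u x v y] crosses_intro[of u y v x]
      crosses_intro[of v x u y] crosses_intro[of v y u x]
    by (auto simp: swap crosses_sym[of "{u, v}"])
qed

lemma crosses_transfer:
  assumes "strict_mono_on A f" "x \<in> A" "y \<in> A" "u \<in> A" "v \<in> A"
  shows "crosses {f x, f y} {f u, f v} \<longleftrightarrow> crosses {x, y} {u, v}"
  using assms by (simp add: crosses_iff strict_mono_on_less)

lemma crosses_between: "crosses g h \<Longrightarrow> \<exists>x\<in>h. \<exists>p\<in>g. \<exists>q\<in>g. p < x \<and> x < q"
  unfolding crosses_def by blast

lemma not_crosses_separated: "g \<subseteq> {a..b} \<Longrightarrow> h \<inter> {a..(b::nat)} = {} \<Longrightarrow> \<not> crosses g h"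
  by (fastforce dest: crosses_between)

lemma not_crosses_separated_open:
  "g \<inter> {a<..<b} = {} \<Longrightarrow> h \<subseteq> {a<..<(b::nat)} \<Longrightarrow> \<not> crosses g h"
  by (fastforce dest: crosses_between simp: crosses_sym[of g])

lemma side_of_edge:
  assumes "i < j" "{x, y} \<inter> {i, j} = {}" "\<not> crosses {x, y} {i, (j::nat)}"
  shows "{x, y} \<subseteq> {i<..<j} \<or> {x, y} \<inter> {i..j} = {}"
proof (rule ccontr)
  assume "\<not> ?thesis"
  then have "(i < x \<and> x < j \<and> (y < i \<or> j < y)) \<or> (i < y \<and> y < j \<and> (x < i \<or> j < x))"
    using assms(2) by auto
  then show False
    using assms(3) crosses_intro[of y i x j] crosses_intro[of i x j y] crosses_intro[of x i y j]
      crosses_intro[of i y j x] crosses_sym[of "{i, j}"] by (auto simp: insert_commute)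
qed

lemma not_crosses_side:
  "i < j \<Longrightarrow> f \<subseteq> {i..j} \<or> f \<inter> {i<..<j} = {} \<Longrightarrow> \<not> crosses f {i, (j::nat)}"
  by (fastforce dest: crosses_between simp: crosses_sym[of f])

lemma cgg_edgesE:
  assumes "e \<in> cgg_edges V"
  obtains a b where "e = {a, b}" "a < b" "a \<in> V" "b \<in> V"
  using assms unfolding cgg_edges_def
  by (auto, metis insert_commute linorder_neqE_nat)

lemma cgg_edgesI: "a \<in> V \<Longrightarrow> b \<in> V \<Longrightarrow> a \<noteq> b \<Longrightarrow> {a, b} \<in> cgg_edges V"
  unfolding cgg_edges_def by blast

lemma cgg_edges_subset: "e \<in> cgg_edges V \<Longrightarrow> e \<subseteq> V"
  unfolding cgg_edges_def by auto

lemma cgg_edges_card: "e \<in> cgg_edges V \<Longrightarrow> card e = 2"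
  unfolding cgg_edges_def by auto

lemma cgg_edges_mono: "V \<subseteq> W \<Longrightarrow> cgg_edges V \<subseteq> cgg_edges W"
  unfolding cgg_edges_def by blast

lemma cgg_edges_finite: "finite V \<Longrightarrow> finite (cgg_edges V)"
  by (rule finite_subset[of _ "Pow V"]) (auto simp: cgg_edges_def)

lemma SPM_finite: "finite V \<Longrightarrow> SPM V M \<Longrightarrow> finite M"
  unfolding SPM_def using cgg_edges_finite finite_subset by blast

lemma card_disjoint_edges:
  assumes "M \<subseteq> cgg_edges V" "\<forall>e\<in>M. \<forall>f\<in>M. e \<noteq> f \<longrightarrow> e \<inter> f = {}"
    and "\<Union>M \<subseteq> W" "finite W"
  shows "2 * card M \<le> card W"
proof -
  have "finite A" if "A \<in> M" for A
    using that assms(3,4) by (meson Union_upper finite_subset subset_trans)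
  then have "card (\<Union>M) = sum card M"
    by (intro card_Union_disjoint) (use assms(2) in \<open>auto simp: pairwise_def disjnt_def\<close>)
  also have "\<dots> = (\<Sum>e\<in>M. 2)"
    using assms(1) cgg_edges_card by (intro sum.cong) auto
  finally show ?thesis using card_mono[OF assms(4,3)] by simp
qed

section \<open>Parallel SPMs and the lower bound for blocking sets\<close>

text \<open>On the vertices 0, ..., 2n-1 the vertex t+1+s is matched with its mirror image
  across the axis between t and t+1, taken modulo 2n.  For t < n these n matchings
  consist of the chords parallel to the chord {t, t+1}.\<close>

definition mirror :: "nat \<Rightarrow> nat \<Rightarrow> nat \<Rightarrow> nat" where
  "mirror n t s = (if s \<le> t then t - s else t + 2*n - s)"

definition par_matching :: "nat \<Rightarrow> nat \<Rightarrow> nat set set" where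
  "par_matching n t = (\<lambda>s. {mirror n t s, t + 1 + s}) ` {..<n}"

lemma par_matching_SPM:
  assumes "t < n"
  shows "SPM {0..<2*n} (par_matching n t)"
proof -
  let ?edge = "\<lambda>s. {mirror n t s, t + 1 + s}"
  have edge: "?edge s \<in> cgg_edges {0..<2*n}" if "s < n" for s
    using assms that by (intro cgg_edgesI) (auto simp: mirror_def)
  have disjoint: "?edge s \<inter> ?edge s' = {} \<and> \<not> crosses (?edge s) (?edge s')"
    if "s < n" "s' < n" "s \<noteq> s'" for s s'
    using assms that unfolding mirror_def crosses_iff by (auto split: if_splits)
  have "inj_on ?edge {..<n}"
    using disjoint by (intro inj_onI) (metis Int_absorb insert_not_empty lessThan_iff)
  then have "card (par_matching n t) = n"
    unfolding par_matching_def by (simp add: card_image)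
  moreover have "par_matching n t \<subseteq> cgg_edges {0..<2*n}"
    using edge unfolding par_matching_def by auto
  ultimately show ?thesis
    unfolding SPM_def par_matching_def using disjoint by auto
qed

text \<open>The endpoints of every edge of the t-th parallel matching sum to 2t + 1
  modulo 2n, so different parallel matchings share no edge.\<close>

lemma par_matching_endpoint_sum:
  assumes "t < n" "g \<in> par_matching n t"
  shows "\<Sum>g = 2*t + 1 \<or> \<Sum>g = 2*t + 1 + 2*n"
proof -
  obtain s where "s < n" "g = {mirror n t s, t + 1 + s}"
    using assms(2) unfolding par_matching_def by blast
  moreover have "mirror n t s \<noteq> t + 1 + s" "mirror n t s + (t + 1 + s) = 2*t + 1 \<or>
      mirror n t s + (t + 1 + s) = 2*t + 1 + 2*n" if "s < n" for s
    using assms(1) that unfolding mirror_def by auto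
  ultimately show ?thesis by auto
qed

lemma par_matching_disjoint:
  assumes "t < n" "t' < n" "t \<noteq> t'"
  shows "par_matching n t \<inter> par_matching n t' = {}"
  using par_matching_endpoint_sum[OF assms(1)] par_matching_endpoint_sum[OF assms(2)] assms
  by fastforce

lemma enumeration:
  fixes V :: "nat set"
  assumes "finite V"
  obtains f where "strict_mono_on {0..<card V} f" "f ` {0..<card V} = V"
proof
  let ?xs = "sorted_list_of_set V"
  show "strict_mono_on {0..<card V} ((!) ?xs)"
    using assms
    by (intro strict_mono_onI) (auto intro!: sorted_wrt_nth_less[OF strict_sorted_list_of_set])
  have "(!) ?xs ` {0..<length ?xs} = set ?xs"
    by (auto simp: set_conv_nth)
  then show "(!) ?xs ` {0..<card V} = V"
    using assms by simp
qed

lemma SPM_transfer: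
  assumes f: "strict_mono_on A f" and M: "SPM A M"
  shows "SPM (f ` A) ((`) f ` M)"
proof -
  have inj: "inj_on f A" using f strict_mono_on_imp_inj_on by blast
  have sub: "M \<subseteq> Pow A" using M cgg_edges_subset unfolding SPM_def by blast
  have "inj_on ((`) f) M" using inj_on_image_Pow[OF inj] sub inj_on_subset by blast
  then have card: "card ((`) f ` M) = card (f ` A) div 2"
    using M card_image[OF inj] by (simp add: card_image SPM_def)
  have edges: "f ` g \<in> cgg_edges (f ` A)" if "g \<in> M" for g
  proof -
    have "g \<in> cgg_edges A" using that M unfolding SPM_def by blast
    then obtain a b where "g = {a, b}" "a < b" "a \<in> A" "b \<in> A"
      by (rule cgg_edgesE)
    then show ?thesis using inj by (auto intro: cgg_edgesI simp: inj_on_eq_iff)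
  qed
  have pairwise: "g \<inter> h = {} \<and> \<not> crosses g h"
    if gh: "g \<in> (`) f ` M" "h \<in> (`) f ` M" "g \<noteq> h" for g h
  proof -
    obtain g0 h0 where g0: "g0 \<in> M" "g = f ` g0" and h0: "h0 \<in> M" "h = f ` h0"
      using gh by blast
    then have "g0 \<noteq> h0" using gh(3) by blast
    then have sep: "g0 \<inter> h0 = {}" "\<not> crosses g0 h0"
      using g0 h0 M unfolding SPM_def by auto
    have "g0 \<in> cgg_edges A" "h0 \<in> cgg_edges A" using g0 h0 M unfolding SPM_def by blast+
    then obtain x y u v where xy: "g0 = {x, y}" "x \<in> A" "y \<in> A"
      and uv: "h0 = {u, v}" "u \<in> A" "v \<in> A"
      by (metis cgg_edgesE)
    have "g \<inter> h = f ` (g0 \<inter> h0)"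
      using g0 h0 xy uv inj by (simp add: inj_on_image_Int)
    moreover have "\<not> crosses g h"
      using sep(2) g0 h0 xy uv crosses_transfer[OF f] by simp
    ultimately show ?thesis using sep(1) by simp
  qed
  show ?thesis
    unfolding SPM_def using card edges pairwise by (intro conjI image_subsetI ballI impI) blast+
qed

lemma disjoint_SPMs:
  assumes "finite V" "card V = 2*n"
  obtains P where "\<And>t. t < n \<Longrightarrow> SPM V (P t)"
    and "\<And>t t'. t < n \<Longrightarrow> t' < n \<Longrightarrow> t \<noteq> t' \<Longrightarrow> P t \<inter> P t' = {}"
proof -
  obtain f where f: "strict_mono_on {0..<2*n} f" "f ` {0..<2*n} = V"
    using enumeration[OF assms(1)] assms(2) by metis
  have inj: "inj_on ((`) f) (Pow {0..<2*n})"
    using f(1) inj_on_image_Pow strict_mono_on_imp_inj_on by blast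
  show ?thesis
  proof
    show "SPM V ((`) f ` par_matching n t)" if "t < n" for t
      using SPM_transfer[OF f(1) par_matching_SPM[OF that]] unfolding f(2) .
    show "(`) f ` par_matching n t \<inter> (`) f ` par_matching n t' = {}"
      if "t < n" "t' < n" "t \<noteq> t'" for t t'
    proof -
      have "par_matching n s \<subseteq> Pow {0..<2*n}" if "s < n" for s
        using par_matching_SPM[OF that] cgg_edges_subset unfolding SPM_def by blast
      then show ?thesis
        using par_matching_disjoint[OF that] inj that
        by (simp add: inj_on_image_Int[symmetric])
    qed
  qed
qed

lemma hitting_set_card:
  assumes "finite S" "\<And>t. t < n \<Longrightarrow> S \<inter> C t \<noteq> {}"
    and "\<And>t t'. t < n \<Longrightarrow> t' < n \<Longrightarrow> t \<noteq> t' \<Longrightarrow> C t \<inter> C t' = {}"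
  shows "n \<le> card S"
proof -
  define pick where "pick t = (SOME x. x \<in> S \<inter> C t)" for t
  have pick: "pick t \<in> S \<inter> C t" if "t < n" for t
    unfolding pick_def using assms(2)[OF that] by (metis all_not_in_conv someI_ex)
  have "inj_on pick {..<n}"
    using pick assms(3) by (intro inj_onI) (metis IntD2 disjoint_iff lessThan_iff)
  moreover have "pick ` {..<n} \<subseteq> S" using pick by auto
  ultimately show ?thesis using card_inj_on_le[OF _ _ assms(1)] by fastforce
qed

text \<open>Lower bound: a blocking set of a convex vertex set of size 2n has at least
  n edges, since it must meet each of n edge-disjoint SPMs.\<close>

lemma blocking_set_card:
  assumes "finite V" "card V = 2*n" "blocking_set V S"
  shows "n \<le> card S"
proof -
  obtain P where "\<And>t. t < n \<Longrightarrow> SPM V (P t)"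
    and disj: "\<And>t t'. t < n \<Longrightarrow> t' < n \<Longrightarrow> t \<noteq> t' \<Longrightarrow> P t \<inter> P t' = {}"
    using disjoint_SPMs[OF assms(1,2)] by blast
  then have "\<And>t. t < n \<Longrightarrow> S \<inter> P t \<noteq> {}"
    using assms(3) unfolding blocking_set_def by blast
  moreover have "finite S"
    using assms(1,3) cgg_edges_finite finite_subset unfolding blocking_set_def by blast
  ultimately show ?thesis using hitting_set_card disj by blast
qed

text \<open>Every edge g of a blocker is the only blocker edge of some SPM: otherwise
  the blocker without g would still meet the n disjoint SPMs, with only n - 1 edges.\<close>

lemma blocker_private_SPM:
  assumes "finite V" "even (card V)" "blocker V B" "g \<in> B"
  obtains Q where "SPM V Q" "B \<inter> Q = {g}"
proof -
  define n where "n = card V div 2"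
  have cardV: "card V = 2*n" using assms(2) unfolding n_def by simp
  obtain P where SPM: "\<And>t. t < n \<Longrightarrow> SPM V (P t)"
    and disj: "\<And>t t'. t < n \<Longrightarrow> t' < n \<Longrightarrow> t \<noteq> t' \<Longrightarrow> P t \<inter> P t' = {}"
    using disjoint_SPMs[OF assms(1) cardV] by blast
  have finB: "finite B"
    using assms(1,3) cgg_edges_finite finite_subset
    unfolding blocker_def blocking_set_def by blast
  have "card (B - {g}) < card B" using card_Diff1_less[OF finB assms(4)] .
  then have "card (B - {g}) < n" using assms(3) unfolding blocker_def n_def by simp
  then obtain t where t: "t < n" "(B - {g}) \<inter> P t = {}"
    using hitting_set_card[of "B - {g}" n P] finB disj by force
  moreover have "B \<inter> P t \<noteq> {}"
    using SPM[OF t(1)] assms(3) unfolding blocker_def blocking_set_def by blast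
  ultimately have "B \<inter> P t = {g}" by blast
  then show ?thesis using that SPM[OF t(1)] by blast
qed

lemma vertex_count_at_edge:
  fixes V :: "nat set"
  assumes "finite V" "i \<in> V" "j \<in> V" "i < j"
  shows "card V = card (V \<inter> {i<..<j}) + card (V - {i..j}) + 2"
    and "card (V \<inter> {i..j}) = card (V \<inter> {i<..<j}) + 2"
    and "card (V - {i<..<j}) = card (V - {i..j}) + 2"
proof -
  have closed: "V \<inter> {i..j} = insert i (insert j (V \<inter> {i<..<j}))"
    using assms(2-4) by (auto simp: less_le)
  have outside: "V - {i<..<j} = insert i (insert j (V - {i..j}))"
    using assms(2-4) by auto
  show inside: "card (V \<inter> {i..j}) = card (V \<inter> {i<..<j}) + 2"
    unfolding closed using assms(1,4) by simp
  show "card (V - {i<..<j}) = card (V - {i..j}) + 2"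
    unfolding outside using assms(1,4) by simp
  show "card V = card (V \<inter> {i<..<j}) + card (V - {i..j}) + 2"
    using card_Int_Diff[OF assms(1), of "{i..j}"] inside by simp
qed

lemma SPM_split_at_edge:
  assumes V: "finite V" "even (card V)" and Q: "SPM V Q" and e: "{i, j} \<in> Q" "i < j"
  shows "2 * card {g\<in>Q. g \<subseteq> {i<..<j}} = card (V \<inter> {i<..<j})"
    and "2 * card {g\<in>Q. g \<inter> {i..j} = {}} = card (V - {i..j})"
proof -
  define Q_in where "Q_in = {g\<in>Q. g \<subseteq> {i<..<j}}"
  define Q_out where "Q_out = {g\<in>Q. g \<inter> {i..j} = {}}"
  have edges: "Q \<subseteq> cgg_edges V" and disjoint: "\<forall>g\<in>Q. \<forall>h\<in>Q. g \<noteq> h \<longrightarrow> g \<inter> h = {}"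
    using Q unfolding SPM_def by auto
  have finQ: "finite Q" using SPM_finite[OF V(1) Q] .
  have "Q \<subseteq> insert {i, j} (Q_in \<union> Q_out)"
  proof
    fix g assume g: "g \<in> Q"
    show "g \<in> insert {i, j} (Q_in \<union> Q_out)"
    proof (cases "g = {i, j}")
      case False
      then have "g \<inter> {i, j} = {}" "\<not> crosses g {i, j}"
        using Q g e(1) unfolding SPM_def by auto
      moreover obtain x y where "g = {x, y}" using g edges by (blast elim: cgg_edgesE)
      ultimately show ?thesis
        using side_of_edge[OF e(2)] g unfolding Q_in_def Q_out_def by auto
    qed simp
  qed
  moreover have fin: "finite (Q_in \<union> Q_out)" using finQ unfolding Q_in_def Q_out_def by simp
  ultimately have "card V div 2 \<le> card (insert {i, j} (Q_in \<union> Q_out))"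
    using Q card_mono[of "insert {i, j} (Q_in \<union> Q_out)" Q] unfolding SPM_def by simp
  also have "\<dots> \<le> card (Q_in \<union> Q_out) + 1"
    using fin by (simp add: card_insert_if)
  also have "\<dots> \<le> card Q_in + card Q_out + 1"
    using card_Un_le by simp
  finally have cover: "card V div 2 \<le> card Q_in + card Q_out + 1" .
  have ij: "i \<in> V" "j \<in> V" using e(1) edges cgg_edges_subset by blast+
  have "\<Union>Q \<subseteq> V" using edges cgg_edges_subset by blast
  then have "2 * card Q_in \<le> card (V \<inter> {i<..<j})"
    by (intro card_disjoint_edges[of _ V]) (use edges disjoint V(1) in \<open>auto simp: Q_in_def\<close>)
  moreover have "2 * card Q_out \<le> card (V - {i..j})"
    using \<open>\<Union>Q \<subseteq> V\<close>
    by (intro card_disjoint_edges[of _ V]) (use edges disjoint V(1) in \<open>auto simp: Q_out_def\<close>)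
  moreover have "card V = 2 * (card V div 2)" using V(2) by simp
  ultimately show "2 * card Q_in = card (V \<inter> {i<..<j})" "2 * card Q_out = card (V - {i..j})"
    using cover vertex_count_at_edge(1)[OF V(1) ij e(2)] unfolding Q_in_def Q_out_def
    by linarith+
qed

section \<open>Gluing SPMs\<close>

text \<open>Let Q be an SPM of V containing at most one edge e of a blocking set B.  If
  a set R of edges of Q avoiding e is compatible with (disjoint from and not crossing)
  every edge on a vertex subset W, and |W|/2 + |R| = |V|/2, then B restricted to W
  blocks W: an SPM of W avoiding B together with R would be an SPM of V avoiding B.\<close>

lemma blocking_set_restrict:
  assumes V: "finite V" and B: "blocking_set V B" and Q: "SPM V Q" "B \<inter> Q \<subseteq> {e}"
    and W: "W \<subseteq> V" and R: "R \<subseteq> Q" "e \<notin> R"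
    and compatible: "\<And>g h. g \<in> cgg_edges W \<Longrightarrow> h \<in> R \<Longrightarrow> g \<inter> h = {} \<and> \<not> crosses g h"
    and count: "card W div 2 + card R = card V div 2"
  shows "blocking_set W (B \<inter> cgg_edges W)"
  unfolding blocking_set_def
proof (intro conjI allI impI)
  show "B \<inter> cgg_edges W \<subseteq> cgg_edges W" by blast
  fix M assume M: "SPM W M"
  show "B \<inter> cgg_edges W \<inter> M \<noteq> {}"
  proof
    assume avoid: "B \<inter> cgg_edges W \<inter> M = {}"
    have M_edges: "M \<subseteq> cgg_edges W" using M unfolding SPM_def by blast
    have finM: "finite M" and finR: "finite R"
      using SPM_finite[OF finite_subset[OF W V] M] SPM_finite[OF V Q(1)] R(1) finite_subset
      by blast+
    have "M \<inter> R = {}"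
      using compatible M_edges cgg_edges_card by fastforce
    then have "card (M \<union> R) = card V div 2"
      using card_Un_disjoint[OF finM finR] M count unfolding SPM_def by simp
    moreover have "M \<union> R \<subseteq> cgg_edges V"
      using M_edges cgg_edges_mono[OF W] R(1) Q(1) unfolding SPM_def by blast
    moreover have "g \<inter> h = {} \<and> \<not> crosses g h"
      if gh: "g \<in> M \<union> R" "h \<in> M \<union> R" "g \<noteq> h" for g h
    proof -
      consider "g \<in> M" "h \<in> M" | "g \<in> M" "h \<in> R" | "g \<in> R" "h \<in> M" | "g \<in> R" "h \<in> R"
        using gh by blast
      then show ?thesis
      proof cases
        case 1 then show ?thesis using M gh(3) unfolding SPM_def by blast
      next
        case 2 then show ?thesis using M_edges compatible by blast
      next
        case 3 then show ?thesis using M_edges compatible[of h g] crosses_sym by blast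
      next
        case 4 then show ?thesis using Q(1) R(1) gh(3) unfolding SPM_def by blast
      qed
    qed
    ultimately have "SPM V (M \<union> R)" unfolding SPM_def by blast
    then obtain g where "g \<in> B" "g \<in> M \<union> R"
      using B unfolding blocking_set_def by blast
    then show False using avoid M_edges Q(2) R by blast
  qed
qed

section \<open>Splitting a blocker at one of its edges\<close>

lemma card_union_squeeze:
  assumes "finite B" "B1 \<union> B2 \<subseteq> B" "card (B1 \<inter> B2) \<le> 1"
    and "a \<le> card B1" "b \<le> card B2" "card B + 1 = a + b"
  shows "card B1 = a" "card B2 = b" "B1 \<union> B2 = B"
proof -
  have fin: "finite B1" "finite B2" using assms(1,2) finite_subset by blast+
  have "card (B1 \<union> B2) \<le> card B" using card_mono[OF assms(1,2)] .
  moreover have "card B1 + card B2 = card (B1 \<union> B2) + card (B1 \<inter> B2)"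
    using card_Un_Int[OF fin] .
  ultimately have eq: "card B1 = a" "card B2 = b" "card (B1 \<union> B2) = card B"
    using assms(3-6) by linarith+
  then show "card B1 = a" "card B2 = b" by simp_all
  show "B1 \<union> B2 = B" using card_subset_eq[OF assms(1,2) eq(3)] .
qed

lemma blocker_split_at_edge:
  fixes V :: "nat set"
  assumes V: "finite V" "even (card V)" and B: "blocker V B" and e: "{i, j} \<in> B" "i < j"
  defines "G1 \<equiv> V \<inter> {i..j}" and "G2 \<equiv> V - {i<..<j}"
    and "B1 \<equiv> B \<inter> cgg_edges (V \<inter> {i..j})" and "B2 \<equiv> B \<inter> cgg_edges (V - {i<..<j})"
  shows "blocking_set G1 B1 \<and> card G1 = 2 * card B1"
    and "blocking_set G2 B2 \<and> card G2 = 2 * card B2"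
    and "\<forall>f\<in>B. \<not> crosses f {i, j}"
proof -
  have blk: "blocking_set V B" and cardB: "card B = card V div 2"
    using B unfolding blocker_def by auto
  have finB: "finite B"
    using blk V(1) cgg_edges_finite finite_subset unfolding blocking_set_def by blast
  obtain Q where Q: "SPM V Q" "B \<inter> Q = {{i, j}}"
    using blocker_private_SPM[OF V B e(1)] by blast
  define Q_in where "Q_in = {g\<in>Q. g \<subseteq> {i<..<j}}"
  define Q_out where "Q_out = {g\<in>Q. g \<inter> {i..j} = {}}"
  have B_sides: "B1 = B \<inter> cgg_edges G1" "B2 = B \<inter> cgg_edges G2"
    unfolding B1_def B2_def G1_def G2_def by simp_all
  have eQ: "{i, j} \<in> Q" using Q(2) by blast
  have ij: "i \<in> V" "j \<in> V"
    using e(1) blk cgg_edges_subset unfolding blocking_set_def by blast+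
  have split: "2 * card Q_in = card (V \<inter> {i<..<j})" "2 * card Q_out = card (V - {i..j})"
    using SPM_split_at_edge[OF V Q(1) eQ e(2)] unfolding Q_in_def Q_out_def by blast+
  have cardG1: "card G1 = 2 * (card Q_in + 1)" and cardG2: "card G2 = 2 * (card Q_out + 1)"
    and cardV: "card V div 2 = card Q_in + card Q_out + 1"
    using vertex_count_at_edge[OF V(1) ij e(2)] split unfolding G1_def G2_def by auto
  have bs1: "blocking_set G1 B1"
    unfolding B_sides
  proof (rule blocking_set_restrict[OF V(1) blk Q(1) equalityD1[OF Q(2)]])
    show "G1 \<subseteq> V" "Q_out \<subseteq> Q" "{i, j} \<notin> Q_out" using e(2) unfolding G1_def Q_out_def by auto
    show "g \<inter> h = {} \<and> \<not> crosses g h" if "g \<in> cgg_edges G1" "h \<in> Q_out" for g h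
      using that cgg_edges_subset[of g G1] not_crosses_separated[of g i j h]
      unfolding G1_def Q_out_def by blast
    show "card G1 div 2 + card Q_out = card V div 2" using cardG1 cardV by simp
  qed
  have bs2: "blocking_set G2 B2"
    unfolding B_sides
  proof (rule blocking_set_restrict[OF V(1) blk Q(1) equalityD1[OF Q(2)]])
    show "G2 \<subseteq> V" "Q_in \<subseteq> Q" "{i, j} \<notin> Q_in" using e(2) unfolding G2_def Q_in_def by auto
    show "g \<inter> h = {} \<and> \<not> crosses g h" if "g \<in> cgg_edges G2" "h \<in> Q_in" for g h
      using that cgg_edges_subset[of g G2] not_crosses_separated_open[of g i j h]
      unfolding G2_def Q_in_def by blast
    show "card G2 div 2 + card Q_in = card V div 2" using cardG2 cardV by simp
  qed
  have "B1 \<inter> B2 \<subseteq> {{i, j}}"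
  proof
    fix g assume g: "g \<in> B1 \<inter> B2"
    then have "g \<subseteq> G1 \<inter> G2" "card g = 2"
      using cgg_edges_subset cgg_edges_card unfolding B_sides by blast+
    moreover have "G1 \<inter> G2 \<subseteq> {i, j}" unfolding G1_def G2_def by auto
    ultimately have "g = {i, j}" using card_seteq[of "{i, j}" g] e(2) by auto
    then show "g \<in> {{i, j}}" by simp
  qed
  then have overlap: "card (B1 \<inter> B2) \<le> 1" using card_mono[of "{{i, j}}" "B1 \<inter> B2"] by simp
  have "finite G1" "finite G2" using V(1) unfolding G1_def G2_def by simp_all
  then have lower: "card Q_in + 1 \<le> card B1" "card Q_out + 1 \<le> card B2"
    using blocking_set_card cardG1 cardG2 bs1 bs2 by blast+
  have "B1 \<union> B2 \<subseteq> B" unfolding B_sides by blast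
  then have exact: "card B1 = card Q_in + 1" "card B2 = card Q_out + 1" and cover: "B1 \<union> B2 = B"
    using card_union_squeeze[OF finB _ overlap lower] cardB cardV by simp_all
  show "blocking_set G1 B1 \<and> card G1 = 2 * card B1" using bs1 exact cardG1 by simp
  show "blocking_set G2 B2 \<and> card G2 = 2 * card B2" using bs2 exact cardG2 by simp
  have "f \<subseteq> {i..j} \<or> f \<inter> {i<..<j} = {}" if "f \<in> B1 \<union> B2" for f
    using that cgg_edges_subset unfolding B_sides G1_def G2_def by blast
  then show "\<forall>f\<in>B. \<not> crosses f {i, j}" using cover not_crosses_side[OF e(2)] by blast
qed

lemma blocker_crossing_free:
  fixes V :: "nat set"
  assumes "finite V" "even (card V)" "blocker V B" "f \<in> B" "g \<in> B"
  shows "\<not> crosses f g"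
proof -
  have "f \<in> cgg_edges V" using assms(3,4) unfolding blocker_def blocking_set_def by blast
  then obtain a b where "f = {a, b}" "a < b" by (rule cgg_edgesE)
  then show ?thesis
    using blocker_split_at_edge(3)[OF assms(1-3), of a b] assms(4,5) crosses_sym by blast
qed

theorem mainTheorem11:
  fixes m i j :: nat and B :: "nat set set"
  assumes "m \<ge> 2"
    and "blocker {0..<2*m} B"
    and "i < j" and "j \<le> 2*m - 1"
    and "{i, j} \<in> B"
  shows "(\<exists>k l. j - i - 1 = 2*k \<and> 2*m - (j - i) - 1 = 2*l \<and> k + l = m - 1 \<and>
            blocking_set {i..j} (B \<inter> cgg_edges {i..j}) \<and>
            card (B \<inter> cgg_edges {i..j}) = k + 1 \<and>
            blocking_set ({j..<2*m} \<union> {0..i}) (B \<inter> cgg_edges ({j..<2*m} \<union> {0..i})) \<and>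
            card (B \<inter> cgg_edges ({j..<2*m} \<union> {0..i})) = l + 1)
         \<and> (\<forall>f\<in>B. \<not> crosses f {i, j})
         \<and> (\<forall>f\<in>B. \<forall>g\<in>B. \<not> crosses f g)"
proof -
  let ?V = "{0..<2*m}" and ?G1 = "{i..j}" and ?G2 = "{j..<2*m} \<union> {0..i}"
  have V: "finite ?V" "even (card ?V)" by simp_all
  have sides: "?V \<inter> {i..j} = ?G1" "?V - {i<..<j} = ?G2" using assms(3,4) by auto
  have "{j..<2*m} \<inter> {0..i} = {}" using assms(3) by auto
  then have cardG: "card ?G1 = j - i + 1" "card ?G2 = 2*m - (j - i) + 1"
    using assms(3,4) card_Un_disjoint[of "{j..<2*m}" "{0..i}"] by simp_all
  note split = blocker_split_at_edge[OF V assms(2,5,3), unfolded sides]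
  define k where "k = card (B \<inter> cgg_edges ?G1) - 1"
  define l where "l = card (B \<inter> cgg_edges ?G2) - 1"
  have "card (B \<inter> cgg_edges ?G1) = k + 1" "card (B \<inter> cgg_edges ?G2) = l + 1"
    using split(1,2) cardG unfolding k_def l_def by auto
  moreover have "j - i - 1 = 2*k" "2*m - (j - i) - 1 = 2*l" "k + l = m - 1"
    using split(1,2) cardG calculation assms(3,4) by auto
  ultimately show ?thesis
    using split blocker_crossing_free[OF V assms(2)] by blast
qed

end
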